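(* Let $q \neq 2$ be a prime power, let $n \geq 1$ be an integer, and let $W$ be the $n$-dimensional affine space over the finite field $\mathbb{F}_q$. Let $A_1,\ldots,A_m$ and $B_1,\ldots,B_m$ be affine subspaces of $W$ such that $A_i \cap B_i = \emptyset$ for each $1 \leq i \leq m$, and $A_i \cap B_j \neq \emptyset$ whenever $1 \leq i < j \leq m$. Then $m \leq q^n + 1$.
   Context: An affine subspace of $W = \mathbb{F}_q^n$ is a translate $v + U$ of a linear subspace $U$ of $\mathbb{F}_q^n$. *)

theory Defs
  imports "HOL-Analysis.Analysis"
begin

definition affine_subspace_F :: "('a::field ^ 'n) set \<Rightarrow> bool" where
  "affine_subspace_F A \<longleftrightarrow> (\<exists>v U. vec.subspace U \<and> A = (\<lambda>u. v + u) ` U)"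

end

theory Submission
  imports Defs
begin

text \<open>Separate each pair \<open>A\<^sub>i, B\<^sub>i\<close> by an affine functional \<open>f\<^sub>i = \<langle>w\<^sub>i, -\<rangle> + c\<^sub>i\<close> that is
  \<open>0\<close> on \<open>A\<^sub>i\<close> and \<open>1\<close> on \<open>B\<^sub>i\<close>. If \<open>i < j\<close> and \<open>w\<^sub>j = \<lambda> w\<^sub>i\<close>, evaluating at a point of
  \<open>A\<^sub>i \<inter> B\<^sub>j\<close> forces \<open>f\<^sub>j = \<lambda> f\<^sub>i + 1\<close>. Hence for \<open>k < i < j\<close> with proportional normals,
  at a point of \<open>A\<^sub>k\<close> both \<open>f\<^sub>i\<close> and \<open>f\<^sub>j\<close> equal \<open>1\<close>, while \<open>f\<^sub>j = \<lambda> f\<^sub>i + 1 = \<lambda> + 1\<close> with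
  \<open>\<lambda> \<noteq> 0\<close>: no direction occurs three times. Since every direction consists of \<open>q - 1 \<ge> 2\<close>
  nonzero vectors, the normals can be chosen injectively, whence even \<open>m \<le> q\<^sup>n\<close>.\<close>

definition vec_dot :: "'a::field ^ 'n \<Rightarrow> 'a ^ 'n \<Rightarrow> 'a" where
  "vec_dot w x = (\<Sum>k\<in>UNIV. w $ k * x $ k)"

lemma vec_dot_scale_left: "vec_dot (t *s w) x = t * vec_dot w x"
  by (simp add: vec_dot_def sum_distrib_left mult.assoc)

lemma linear_functional_eq_vec_dot:
  fixes \<phi> :: "'a::field ^ 'n \<Rightarrow> 'a"
  assumes "Vector_Spaces.linear (*s) (*) \<phi>"
  shows "\<phi> x = vec_dot (\<chi> k. \<phi> (axis k 1)) x"
proof -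
  interpret Vector_Spaces.linear "(*s)" "(*)" \<phi> by fact
  have "\<phi> x = \<phi> (\<Sum>k\<in>UNIV. x $ k *s axis k 1)"
    by (simp add: basis_expansion)
  also have "\<dots> = (\<Sum>k\<in>UNIV. x $ k * \<phi> (axis k 1))"
    by (simp add: sum scale)
  finally show ?thesis
    by (simp add: vec_dot_def mult.commute)
qed

lemma linear_functional_separating_point:
  fixes S :: "('a::field ^ 'n) set"
  assumes "vec.subspace S" and "d \<notin> S"
  shows "\<exists>\<phi>. Vector_Spaces.linear (*s) (*) \<phi> \<and> \<phi> d = 1 \<and> (\<forall>x\<in>S. \<phi> x = 0)"
proof -
  interpret vector_space_pair "(*s) :: 'a \<Rightarrow> 'a ^ 'n \<Rightarrow> _" "(*) :: 'a \<Rightarrow> 'a \<Rightarrow> 'a"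
    by unfold_locales
  obtain B where B: "B \<subseteq> S" "vec.independent B" "S \<subseteq> vec.span B"
    using vec.maximal_independent_subset by blast
  have "vec.span B \<subseteq> S"
    using B(1) assms(1) by (rule vec.span_minimal)
  with assms(2) have d: "d \<notin> vec.span B" by blast
  obtain \<phi> where \<phi>: "Vector_Spaces.linear (*s) (*) \<phi>"
    "\<forall>x\<in>insert d B. \<phi> x = (if x = d then 1 else 0)"
    using linear_independent_extend[OF vec.independent_insertI[OF d B(2)],
        of "\<lambda>x. if x = d then 1 else 0"] by blast
  have "\<phi> x = 0" if "x \<in> vec.span B" for x
    using linear_eq_0_on_span[OF \<phi>(1) _ that] \<phi>(2) d vec.span_base by fastforce
  with \<phi> B(3) show ?thesis by auto
qed

definition affine_separator :: "'a::field ^ 'n \<Rightarrow> 'a \<Rightarrow> ('a ^ 'n) set \<Rightarrow> ('a ^ 'n) set \<Rightarrow> bool"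
  where "affine_separator w c A B \<longleftrightarrow>
    (\<forall>x\<in>A. vec_dot w x + c = 0) \<and> (\<forall>x\<in>B. vec_dot w x + c = 1)"

lemma affine_subspace_F_nonempty: "affine_subspace_F A \<Longrightarrow> A \<noteq> {}"
  unfolding affine_subspace_F_def using vec.subspace_0 by blast

lemma disjoint_affine_subspaces_separable:
  assumes "affine_subspace_F A" "affine_subspace_F B" "A \<inter> B = {}"
  shows "\<exists>w c. affine_separator w c A B"
proof -
  obtain a U where U: "vec.subspace U" "A = (\<lambda>u. a + u) ` U"
    using assms(1) unfolding affine_subspace_F_def by blast
  obtain b V where V: "vec.subspace V" "B = (\<lambda>v. b + v) ` V"
    using assms(2) unfolding affine_subspace_F_def by blast
  have "b - a \<notin> vec.span (U \<union> V)"
  proof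
    assume "b - a \<in> vec.span (U \<union> V)"
    then obtain u v where uv: "u \<in> U" "v \<in> V" "b - a = u + v"
      using U(1) V(1) by (auto simp: vec.span_Un vec.span_eq_iff[THEN iffD2])
    then have "a + u = b + - v" "- v \<in> V"
      using V(1) by (auto simp: algebra_simps vec.subspace_neg)
    with uv(1) U(2) V(2) assms(3) show False by blast
  qed
  then obtain \<phi> where \<phi>: "Vector_Spaces.linear (*s) (*) \<phi>" "\<phi> (b - a) = 1"
    "\<forall>x\<in>vec.span (U \<union> V). \<phi> x = 0"
    using linear_functional_separating_point[OF vec.subspace_span] by blast
  interpret Vector_Spaces.linear "(*s)" "(*)" \<phi> by fact
  have "\<phi> (a + u) = \<phi> a" if "u \<in> U" for u
    using \<phi>(3) that by (simp add: add vec.span_base)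
  moreover have "\<phi> (b + v) = \<phi> a + 1" if "v \<in> V" for v
  proof -
    have "\<phi> b = \<phi> a + 1"
      using \<phi>(2) diff[of b a] by (metis add.commute diff_eq_eq)
    then show ?thesis
      using \<phi>(3) that by (simp add: add vec.span_base)
  qed
  ultimately have "affine_separator (\<chi> k. \<phi> (axis k 1)) (- \<phi> a) A B"
    using U(2) V(2) unfolding affine_separator_def
    by (auto simp: linear_functional_eq_vec_dot[OF \<phi>(1), symmetric])
  then show ?thesis by blast
qed

lemma affine_separator_nonzero:
  assumes "affine_separator w c A B" "A \<noteq> {}" "B \<noteq> {}"
  shows "w \<noteq> 0"
  using assms by (fastforce simp: affine_separator_def vec_dot_def)

lemma affine_separator_scaled:
  assumes "affine_separator w c A B" "affine_separator (l *s w) c' A' B'" "A \<inter> B' \<noteq> {}"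
  shows "vec_dot (l *s w) x + c' = l * (vec_dot w x + c) + 1"
proof -
  obtain y where "y \<in> A" "y \<in> B'" using assms(3) by blast
  then have "vec_dot w y = - c" "l * vec_dot w y + c' = 1"
    using assms(1,2) by (auto simp: affine_separator_def vec_dot_scale_left eq_neg_iff_add_eq_0)
  then show ?thesis
    by (simp add: vec_dot_scale_left algebra_simps)
qed

lemma no_three_proportional_separators:
  assumes k: "affine_separator w\<^sub>k c\<^sub>k A\<^sub>k B\<^sub>k" and i: "affine_separator w\<^sub>i c\<^sub>i A\<^sub>i B\<^sub>i"
    and j: "affine_separator w\<^sub>j c\<^sub>j A\<^sub>j B\<^sub>j"
    and "A\<^sub>k \<noteq> {}" "A\<^sub>k \<inter> B\<^sub>i \<noteq> {}" "A\<^sub>k \<inter> B\<^sub>j \<noteq> {}" "A\<^sub>i \<inter> B\<^sub>j \<noteq> {}"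
    and "w\<^sub>i = l *s w\<^sub>k" "w\<^sub>j = u *s w\<^sub>i" "u \<noteq> 0"
  shows False
proof -
  obtain x where x: "x \<in> A\<^sub>k" using assms(4) by blast
  have fk: "vec_dot w\<^sub>k x + c\<^sub>k = 0"
    using k x by (simp add: affine_separator_def)
  have "vec_dot w\<^sub>i x + c\<^sub>i = 1"
    using affine_separator_scaled[OF k _ assms(5), of l c\<^sub>i] i assms(8) fk by simp
  moreover have "vec_dot w\<^sub>j x + c\<^sub>j = u * (vec_dot w\<^sub>i x + c\<^sub>i) + 1"
    using affine_separator_scaled[OF i _ assms(7), of u c\<^sub>j] j assms(9) by simp
  moreover have "vec_dot w\<^sub>j x + c\<^sub>j = 1"
    using affine_separator_scaled[OF k _ assms(6), of "u * l" c\<^sub>j] j assms(8,9) fk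
    by (simp add: vector_smult_assoc)
  ultimately show False
    using assms(10) by simp
qed

definition nonzero_multiples :: "'a::field ^ 'n \<Rightarrow> ('a ^ 'n) set" where
  "nonzero_multiples v = (\<lambda>t. t *s v) ` (- {0})"

lemma nonzero_multiples_self: "v \<in> nonzero_multiples v"
  unfolding nonzero_multiples_def by (rule image_eqI[of _ _ 1]) auto

lemma nonzero_multiples_eq_if_mem:
  assumes "y \<in> nonzero_multiples v"
  shows "nonzero_multiples y = nonzero_multiples v"
proof -
  obtain t where t: "t \<noteq> 0" "y = t *s v"
    using assms unfolding nonzero_multiples_def by blast
  have "(\<lambda>s. s * t) ` (- {0}) = - {0}"
  proof (intro equalityI subsetI)
    fix x :: 'a assume "x \<in> - {0}"
    then show "x \<in> (\<lambda>s. s * t) ` (- {0})"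
      using t(1) by (intro image_eqI[of _ _ "x / t"]) auto
  qed (use t(1) in auto)
  moreover have "nonzero_multiples y = (\<lambda>r. r *s v) ` ((\<lambda>s. s * t) ` (- {0}))"
    unfolding nonzero_multiples_def t(2) image_image by (simp add: vector_smult_assoc)
  ultimately show ?thesis
    unfolding nonzero_multiples_def by simp
qed

lemma card_nonzero_multiples:
  fixes v :: "'a::{field,finite} ^ 'n"
  assumes "v \<noteq> 0"
  shows "card (nonzero_multiples v) = CARD('a) - 1"
proof -
  have "inj (\<lambda>t. t *s v)"
    using assms by (auto intro: injI simp: vec.scale_cancel_right)
  then have "card (nonzero_multiples v) = card (- {0 :: 'a})"
    unfolding nonzero_multiples_def by (simp add: card_image inj_on_subset)
  then show ?thesis
    by (simp add: Compl_eq_Diff_UNIV card_Diff_singleton)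
qed

lemma card_le_2_if_no_increasing_triple:
  fixes S :: "'a::linorder set"
  assumes "finite S" and "\<And>k i j. k \<in> S \<Longrightarrow> i \<in> S \<Longrightarrow> j \<in> S \<Longrightarrow> k < i \<Longrightarrow> i < j \<Longrightarrow> False"
  shows "card S \<le> 2"
proof (rule ccontr)
  assume "\<not> card S \<le> 2"
  moreover define xs where "xs = sorted_list_of_set S"
  ultimately have "2 < length xs" "sorted_wrt (<) xs" "set xs = S"
    using assms(1) by auto
  then have "xs ! 0 \<in> S" "xs ! 1 \<in> S" "xs ! 2 \<in> S" "xs ! 0 < xs ! 1" "xs ! 1 < xs ! 2"
    by (auto simp: sorted_wrt_nth_less intro: nth_mem)
  then show False
    using assms(2) by blast
qed

lemma card_le_card_if_fibres_le_classes:
  fixes f :: "'i \<Rightarrow> 'x set"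
  assumes "finite I" "finite X" "\<And>i. i \<in> I \<Longrightarrow> f i \<subseteq> X"
    and "\<And>i j. i \<in> I \<Longrightarrow> j \<in> I \<Longrightarrow> f i \<inter> f j \<noteq> {} \<Longrightarrow> f i = f j"
    and "\<And>i. i \<in> I \<Longrightarrow> card {j \<in> I. f j = f i} \<le> card (f i)"
  shows "card I \<le> card X"
proof -
  have fin: "\<And>C. C \<in> f ` I \<Longrightarrow> finite C"
    using assms(2,3) finite_subset by blast
  have "card I = (\<Sum>C\<in>f ` I. card {i \<in> I. f i = C})"
    using sum.image_gen[OF assms(1), of "\<lambda>_. 1 :: nat" f] by simp
  also have "\<dots> \<le> (\<Sum>C\<in>f ` I. card C)"
    by (rule sum_mono) (use assms(5) in auto)
  also have "\<dots> = card (\<Union> (f ` I))"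
    using assms(4) fin by (intro card_Union_disjoint[symmetric]) (auto simp: pairwise_def disjnt_def)
  also have "\<dots> \<le> card X"
    using assms(2,3) by (intro card_mono) auto
  finally show ?thesis .
qed

theorem theorem1p4:
  fixes A B :: "nat \<Rightarrow> ('a::{field,finite} ^ 'n) set" and m :: nat
  assumes "CARD('a) \<noteq> 2"
    and "\<And>i. i \<in> {1..m} \<Longrightarrow> affine_subspace_F (A i)"
    and "\<And>i. i \<in> {1..m} \<Longrightarrow> affine_subspace_F (B i)"
    and "\<And>i. i \<in> {1..m} \<Longrightarrow> A i \<inter> B i = {}"
    and "\<And>i j. 1 \<le> i \<Longrightarrow> i < j \<Longrightarrow> j \<le> m \<Longrightarrow> A i \<inter> B j \<noteq> {}"
  shows "m \<le> CARD('a) ^ CARD('n) + 1"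
proof -
  have "\<forall>i\<in>{1..m}. \<exists>p. affine_separator (fst p) (snd p) (A i) (B i)"
    using disjoint_affine_subspaces_separable[OF assms(2-4)] by auto
  then obtain p where "\<forall>i\<in>{1..m}. affine_separator (fst (p i)) (snd (p i)) (A i) (B i)"
    by (rule bchoice[THEN exE])
  then obtain w c where sep: "\<And>i. i \<in> {1..m} \<Longrightarrow> affine_separator (w i) (c i) (A i) (B i)"
    by (intro that[of "\<lambda>i. fst (p i)" "\<lambda>i. snd (p i)"]) blast
  have w_nonzero: "w i \<noteq> 0" if "i \<in> {1..m}" for i
    using affine_separator_nonzero[OF sep[OF that]] affine_subspace_F_nonempty assms(2,3) that
    by blast
  let ?dir = "\<lambda>i. nonzero_multiples (w i)"
  have no_triple: False
    if idx: "k \<in> {1..m}" "i \<in> {1..m}" "j \<in> {1..m}" "k < i" "i < j"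
      and dir: "?dir i = ?dir k" "?dir j = ?dir i"
    for k i j
  proof -
    obtain l where l: "w i = l *s w k"
      using nonzero_multiples_self[of "w i"] dir(1) by (auto simp: nonzero_multiples_def)
    obtain u where u: "u \<noteq> 0" "w j = u *s w i"
      using nonzero_multiples_self[of "w j"] dir(2) by (auto simp: nonzero_multiples_def)
    have "A k \<noteq> {}"
      using affine_subspace_F_nonempty assms(2) idx(1) by blast
    moreover have "A k \<inter> B i \<noteq> {}" "A k \<inter> B j \<noteq> {}" "A i \<inter> B j \<noteq> {}"
      using assms(5) idx by auto
    ultimately show False
      by (rule no_three_proportional_separators[OF sep[OF idx(1)] sep[OF idx(2)] sep[OF idx(3)]
            _ _ _ _ l u(2) u(1)])
  qed
  have fibre_le_2: "card {j \<in> {1..m}. ?dir j = ?dir i} \<le> 2" for i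
  proof (rule card_le_2_if_no_increasing_triple)
    fix k i' j
    assume "k \<in> {j \<in> {1..m}. ?dir j = ?dir i}" "i' \<in> {j \<in> {1..m}. ?dir j = ?dir i}"
      "j \<in> {j \<in> {1..m}. ?dir j = ?dir i}" "k < i'" "i' < j"
    then show False
      using no_triple[of k i' j] by auto
  qed simp
  have "card {0 :: 'a, 1} \<le> CARD('a)"
    by (rule card_mono) auto
  then have "2 \<le> CARD('a) - 1"
    using assms(1) by simp
  then have fibre_le: "card {j \<in> {1..m}. ?dir j = ?dir i} \<le> card (?dir i)"
    if "i \<in> {1..m}" for i
    using fibre_le_2[of i] card_nonzero_multiples[OF w_nonzero[OF that]] by linarith
  have dir_eq: "?dir i = ?dir j" if common: "?dir i \<inter> ?dir j \<noteq> {}" for i j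
  proof -
    obtain y where "y \<in> ?dir i" "y \<in> ?dir j"
      using common by blast
    then show ?thesis
      using nonzero_multiples_eq_if_mem[of y "w i"] nonzero_multiples_eq_if_mem[of y "w j"] by simp
  qed
  have "card {1..m} \<le> CARD('a ^ 'n)"
    by (rule card_le_card_if_fibres_le_classes[where f = ?dir]) (use fibre_le dir_eq in auto)
  then show ?thesis by simp
qed

end
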